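(* Let $m,n\ge0$. The elements $R(I,J)$ with $(I,J)\in X^+(m,n)$ span the ring $U^+_{m,n}$ as a $\mathbb Z$-module.
   Context: $U^+_{m,n}$ is the commutative ring generated over $\mathbb Z$ by $u_1,u_2,\dots$ and $v_0,v_1,\dots$, with conventions $u_0=1$ and $u_i=v_i=0$ for $i<0$, subject to the relations $R_I(w)=0$ for all $I\in\mathbb Z^{m+1}$, where $w_i=u_i-v_{-i-m+n}$ ($i\in\mathbb Z$) and for $I=(i_1,\dots,i_p)\in\mathbb Z^p$, $R_I(w)=\det(w_{i_\alpha+\beta-1})_{1\le\alpha,\beta\le p}$ ($R_\emptyset=1$); write $|I|=p$. For $I\in\mathbb Z^p$ and $J=(j_1,\dots,j_q)$ nonnegative integers, $R(I,J)=R_I(w)u_1^{j_1}\cdots u_q^{j_q}$. $X^+(m,n)$ is the set of pairs $(I,J)$ with $I$ a strictly decreasing finite sequence of integers, $J$ a finite sequence of nonnegative integers, $|I|\le m$, $|J|\le n$, $|I|-|J|=m-n$. *)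

theory Defs
  imports "HOL-Library.Poly_Mapping" "Jordan_Normal_Form.Determinant"
begin

text \<open>Generators of the polynomial ring: Ugen k stands for u_(k+1) (k = 0,1,...),
  Vgen k stands for v_k (k = 0,1,...).\<close>
datatype var = Ugen nat | Vgen nat

type_synonym zpoly = "(var \<Rightarrow>\<^sub>0 nat) \<Rightarrow>\<^sub>0 int"

definition Var :: "var \<Rightarrow> zpoly" where
  "Var x = Poly_Mapping.single (Poly_Mapping.single x 1) 1"

definition uu :: "int \<Rightarrow> zpoly" where
  "uu i = (if i = 0 then 1 else if i > 0 then Var (Ugen (nat (i - 1))) else 0)"

definition vv :: "int \<Rightarrow> zpoly" where
  "vv i = (if i < 0 then 0 else Var (Vgen (nat i)))"

definition ww :: "nat \<Rightarrow> nat \<Rightarrow> int \<Rightarrow> zpoly" where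
  "ww m n i = uu i - vv (- i - int m + int n)"

text \<open>R_I(w) = det (w_(i_alpha + beta - 1)), 1 <= alpha, beta <= p (here 0-indexed).\<close>
definition RI :: "nat \<Rightarrow> nat \<Rightarrow> int list \<Rightarrow> zpoly" where
  "RI m n I = det (mat (length I) (length I) (\<lambda>(a, b). ww m n (I ! a + int b)))"

definition RIJ :: "nat \<Rightarrow> nat \<Rightarrow> int list \<Rightarrow> nat list \<Rightarrow> zpoly" where
  "RIJ m n I J = RI m n I * (\<Prod>k<length J. uu (int k + 1) ^ (J ! k))"

definition Xplus :: "nat \<Rightarrow> nat \<Rightarrow> (int list \<times> nat list) set" where
  "Xplus m n = {(I, J). sorted_wrt (>) I \<and> length I \<le> m \<and> length J \<le> n
       \<and> int (length I) - int (length J) = int m - int n}"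

definition gen_ideal :: "('a::comm_ring_1) set \<Rightarrow> 'a set" where
  "gen_ideal S = {\<Sum>i<k. a i * s i | (k::nat) a s. \<forall>i<k. s i \<in> S}"

definition zspan :: "('a::comm_ring_1) set \<Rightarrow> 'a set" where
  "zspan S = {\<Sum>i<k. of_int (c i) * s i | (k::nat) c s. \<forall>i<k. s i \<in> S}"

text \<open>The defining ideal of U^+_(m,n): generated by R_I(w), I in Z^(m+1).\<close>
definition Uideal :: "nat \<Rightarrow> nat \<Rightarrow> zpoly set" where
  "Uideal m n = gen_ideal {RI m n I | I. length I = m + 1}"

end

theory Submission
  imports Defs "HOL-Combinatorics.Permutations"
begin

text \<open>Let M be the Z-span of the R(I,J) plus the defining ideal. By descending induction on p we
  show R_I(w) f \<in> M for every I of length p and every polynomial f: for p = m + 1 this is the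
  ideal, and p = 0 gives the theorem since R_[] = 1. If p + n - m < 0, a last row (0, ..., 0, 1)
  pads I to length p + 1. Otherwise let q = p + n - m and show R_I(w) u^J f \<in> M for all J of
  length q by induction on f. For f = 1, sorting I turns R_I(w) u^J into \<plusminus>R(I',J) with
  (I',J) \<in> X^+(m,n). Every variable is u_l or u_l - w_l for some l, and u_l = w_l for l > q;
  a factor u_l with l \<le> q is absorbed into u^J. A factor w_c with c outside the window n - m < c \<le> q is
  removed by expanding a determinant of size p + 1 along a new row (w_(c-p), ..., w_c) resp.
  (w_c, ..., w_(c+p)): the expansion involves one determinant of size p + 1, which lies in M by
  induction on p, and minors that are sums of determinants R_I'(w) of size p times w-entries whose
  index is closer to the window.\<close>

section \<open>Determinants of shifted sequences\<close>

definition Rdet :: "(int \<Rightarrow> 'a::comm_ring_1) \<Rightarrow> int list \<Rightarrow> 'a" where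
  "Rdet w K = det (mat (length K) (length K) (\<lambda>(a, b). w (K ! a + int b)))"

text \<open>The minor of the matrix of K @ [y] at its last row and column j.\<close>

definition Rdet_minor :: "(int \<Rightarrow> 'a::comm_ring_1) \<Rightarrow> int list \<Rightarrow> nat \<Rightarrow> 'a" where
  "Rdet_minor w K j =
     det (mat (length K) (length K) (\<lambda>(a, b). w (K ! a + int b + (if j \<le> b then 1 else 0))))"

definition Rdet_shifted_cols :: "(int \<Rightarrow> 'a::comm_ring_1) \<Rightarrow> int list \<Rightarrow> nat set \<Rightarrow> 'a" where
  "Rdet_shifted_cols w K T =
     det (mat (length K) (length K) (\<lambda>(a, b). w (K ! a + int b + (if b \<in> T then 1 else 0))))"

definition shift_entries :: "int list \<Rightarrow> nat set \<Rightarrow> int list" where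
  "shift_entries K S = map (\<lambda>a. K ! a + (if a \<in> S then 1 else 0)) [0..<length K]"

lemma length_shift_entries [simp]: "length (shift_entries K S) = length K"
  by (simp add: shift_entries_def)

lemma Rdet_Nil [simp]: "Rdet w [] = 1"
  by (simp add: Rdet_def)

lemma Rdet_snoc_expand:
  "Rdet w (K @ [y]) =
     (\<Sum>j<Suc (length K). (-1) ^ (length K + j) * w (y + int j) * Rdet_minor w K j)"
proof -
  let ?p = "length K"
  let ?A = "mat (Suc ?p) (Suc ?p) (\<lambda>(a, b). w ((K @ [y]) ! a + int b))"
  have "Rdet w (K @ [y]) = (\<Sum>j<Suc ?p. ?A $$ (?p, j) * cofactor ?A ?p j)"
    unfolding Rdet_def by (simp add: laplace_expansion_row[of ?A "Suc ?p" ?p])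
  also have "\<dots> = (\<Sum>j<Suc ?p. (-1) ^ (?p + j) * w (y + int j) * Rdet_minor w K j)"
  proof (rule sum.cong[OF refl])
    fix j assume j: "j \<in> {..<Suc ?p}"
    have "mat_delete ?A ?p j
        = mat ?p ?p (\<lambda>(a, b). w (K ! a + int b + (if j \<le> b then 1 else 0)))"
      unfolding mat_delete_def by (rule eq_matI) (use j in \<open>auto simp: nth_append algebra_simps\<close>)
    then show "?A $$ (?p, j) * cofactor ?A ?p j = (-1) ^ (?p + j) * w (y + int j) * Rdet_minor w K j"
      unfolding cofactor_def Rdet_minor_def using j by simp
  qed
  finally show ?thesis .
qed

lemma Rdet_minor_0: "Rdet_minor w K 0 = Rdet w (map (\<lambda>x. x + 1) K)"
  unfolding Rdet_minor_def Rdet_def by (rule arg_cong[where f = det], rule eq_matI) (auto simp: algebra_simps)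

lemma Rdet_minor_length: "Rdet_minor w K (length K) = Rdet w K"
  unfolding Rdet_minor_def Rdet_def by (rule arg_cong[where f = det], rule eq_matI) auto

lemma Rdet_mult_last_column_entry:
  "Rdet w K * (w (y + int (length K)) * g) =
     Rdet w (K @ [y]) * g -
       (\<Sum>j<length K. (-1) ^ (length K + j) * (Rdet_minor w K j * (w (y + int j) * g)))"
proof -
  let ?S = "\<Sum>j<length K. (-1) ^ (length K + j) * w (y + int j) * Rdet_minor w K j"
  have "Rdet w (K @ [y]) = ?S + w (y + int (length K)) * Rdet w K"
    by (simp add: Rdet_snoc_expand Rdet_minor_length power_add[symmetric])
  moreover have "(\<Sum>j<length K. (-1) ^ (length K + j) * (Rdet_minor w K j * (w (y + int j) * g))) = ?S * g"
    unfolding sum_distrib_right by (rule sum.cong) (simp_all add: mult_ac)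
  ultimately show ?thesis by (simp add: algebra_simps)
qed

lemma Rdet_mult_first_column_entry:
  "Rdet w (map (\<lambda>x. x + 1) K) * (w y * g) =
     (-1) ^ length K * (Rdet w (K @ [y]) * g -
       (\<Sum>j<length K. (-1) ^ (length K + Suc j) * (Rdet_minor w K (Suc j) * (w (y + int (Suc j)) * g))))"
proof -
  let ?S = "\<Sum>j<length K. (-1) ^ (length K + Suc j) * w (y + int (Suc j)) * Rdet_minor w K (Suc j)"
  have "Rdet w (K @ [y]) = (-1) ^ length K * w y * Rdet w (map (\<lambda>x. x + 1) K) + ?S"
    unfolding Rdet_snoc_expand sum.lessThan_Suc_shift by (simp add: Rdet_minor_0)
  moreover have "(\<Sum>j<length K. (-1) ^ (length K + Suc j) * (Rdet_minor w K (Suc j) * (w (y + int (Suc j)) * g)))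
      = ?S * g"
    unfolding sum_distrib_right by (rule sum.cong) (simp_all add: mult_ac)
  moreover have "(-1) ^ length K * (-1) ^ length K = (1 :: 'a)"
    by (simp add: power_add[symmetric])
  ultimately show ?thesis by (simp add: algebra_simps)
qed

lemma Rdet_snoc_unit_row:
  assumes "\<And>j. j < length K \<Longrightarrow> w (y + int j) = 0" and "w (y + int (length K)) = 1"
  shows "Rdet w (K @ [y]) = Rdet w K"
  using Rdet_mult_last_column_entry[of w K y 1] assms by simp

lemma Rdet_shifted_cols_final_segment:
  "j \<le> length K \<Longrightarrow> Rdet_shifted_cols w K {j..<length K} = Rdet_minor w K j"
  unfolding Rdet_shifted_cols_def Rdet_minor_def by (rule arg_cong[where f = det], rule eq_matI) auto

lemma Rdet_shifted_cols_eq_0: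
  assumes "b \<in> T" "Suc b < length K" "Suc b \<notin> T"
  shows "Rdet_shifted_cols w K T = 0"
  unfolding Rdet_shifted_cols_def
  by (rule det_identical_columns[of _ "length K" b "Suc b"])
    (use assms in \<open>auto intro!: eq_vecI simp: algebra_simps\<close>)

lemma up_closed_subset_eq_atLeastLessThan:
  fixes T :: "nat set"
  assumes T: "T \<subseteq> {..<n}" and card: "card T = n - j" and "j \<le> n"
    and up: "\<And>b. b \<in> T \<Longrightarrow> Suc b < n \<Longrightarrow> Suc b \<in> T"
  shows "T = {j..<n}"
proof (cases "T = {}")
  case True
  with card \<open>j \<le> n\<close> show ?thesis by simp
next
  case False
  have "finite T" using T finite_subset by blast
  define t where "t = Min T"
  have t: "t \<in> T" "\<And>x. x \<in> T \<Longrightarrow> t \<le> x"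
    using Min_in[OF \<open>finite T\<close> False] Min_le[OF \<open>finite T\<close>] by (auto simp: t_def)
  have "t + d \<in> T" if "t + d < n" for d
    using that by (induction d) (use t up in auto)
  then have "{t..<n} \<subseteq> T" by (metis atLeastLessThan_iff le_Suc_ex subsetI)
  with T t have "T = {t..<n}" by fastforce
  with card T t \<open>j \<le> n\<close> show ?thesis by auto
qed

lemma sum_card_subsets_permutes:
  assumes p: "p permutes A"
  shows "(\<Sum>S\<in>{S. S \<subseteq> A \<and> card S = k}. h S) = (\<Sum>T\<in>{T. T \<subseteq> A \<and> card T = k}. h (p -` T))"
proof -
  have "inj p" "surj p" "\<And>x. p x \<in> A \<longleftrightarrow> x \<in> A"
    using p by (auto simp: permutes_inj permutes_surj permutes_in_image)
  then show ?thesis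
    by (intro sum.reindex_bij_witness[where i = "\<lambda>T. p -` T" and j = "\<lambda>S. p ` S"])
      (auto simp: inj_vimage_image_eq surj_image_vimage_eq card_image card_vimage_inj inj_on_subset)
qed

text \<open>Expanding both determinants by permutations, raising the rows in S corresponds, after
  reindexing S by the permutation, to raising the columns in a set T of the same size; only the
  final segment T = {j..<length K} avoids two equal adjacent columns.\<close>

lemma Rdet_minor_eq_sum_shift_entries:
  assumes j: "j \<le> length K"
  shows "Rdet_minor w K j =
    (\<Sum>S\<in>{S. S \<subseteq> {..<length K} \<and> card S = length K - j}. Rdet w (shift_entries K S))"
proof -
  let ?n = "length K"
  let ?Sub = "{S. S \<subseteq> {..<?n} \<and> card S = ?n - j}"
  let ?P = "{p. p permutes {..<?n}}"
  let ?term = "\<lambda>p S. \<Prod>i<?n. w (K ! i + int (p i) + (if i \<in> S then 1 else 0))"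
  have "finite ?Sub" by (rule finite_subset[of _ "Pow {..<?n}"]) auto
  have rows: "Rdet w (shift_entries K S) = (\<Sum>p\<in>?P. signof p * ?term p S)" for S
    unfolding Rdet_def
    by (subst det_def'[of _ ?n], simp, rule sum.cong)
      (auto intro!: prod.cong simp: shift_entries_def algebra_simps lessThan_atLeast0)
  have cols: "Rdet_shifted_cols w K T = (\<Sum>p\<in>?P. signof p * ?term p (p -` T))" for T
    unfolding Rdet_shifted_cols_def
    by (subst det_def'[of _ ?n], simp, rule sum.cong) (auto intro!: prod.cong simp: lessThan_atLeast0)
  have "(\<Sum>S\<in>?Sub. Rdet w (shift_entries K S)) = (\<Sum>p\<in>?P. signof p * (\<Sum>S\<in>?Sub. ?term p S))"
    unfolding rows sum_distrib_left by (rule sum.swap)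
  also have "\<dots> = (\<Sum>p\<in>?P. signof p * (\<Sum>T\<in>?Sub. ?term p (p -` T)))"
    by (intro sum.cong refl arg_cong[where f = "(*) _"] sum_card_subsets_permutes) simp
  also have "\<dots> = (\<Sum>T\<in>?Sub. Rdet_shifted_cols w K T)"
    unfolding cols sum_distrib_left by (rule sum.swap)
  also have "\<dots> = Rdet_shifted_cols w K {j..<?n}"
  proof (rule sum.mono_neutral_right[OF \<open>finite ?Sub\<close>, of "{{j..<?n}}", simplified])
    show "{j..<?n} \<subseteq> {..<?n}" by auto
    show "\<forall>T\<in>?Sub - {{j..<?n}}. Rdet_shifted_cols w K T = 0"
    proof
      fix T assume T: "T \<in> ?Sub - {{j..<?n}}"
      then obtain b where "b \<in> T" "Suc b < ?n" "Suc b \<notin> T"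
        using up_closed_subset_eq_atLeastLessThan[of T ?n j] j by blast
      then show "Rdet_shifted_cols w K T = 0" by (rule Rdet_shifted_cols_eq_0)
    qed
  qed
  also have "\<dots> = Rdet_minor w K j" by (rule Rdet_shifted_cols_final_segment[OF j])
  finally show ?thesis ..
qed

lemma Rdet_permute_list:
  assumes p: "p permutes {..<length K}"
  shows "Rdet w (permute_list p K) = signof p * Rdet w K"
proof -
  let ?n = "length K"
  let ?A = "mat ?n ?n (\<lambda>(a, b). w (K ! a + int b))"
  have "Rdet w (permute_list p K) = det (mat ?n ?n (\<lambda>(i, j). ?A $$ (p i, j)))"
    unfolding Rdet_def
    by (rule arg_cong[where f = det], rule eq_matI)
      (use permutes_in_image[OF p] in \<open>auto simp: permute_list_nth[OF p]\<close>)
  also have "\<dots> = signof p * det ?A"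
    by (rule det_permute_rows) (use p in \<open>auto simp: lessThan_atLeast0\<close>)
  finally show ?thesis unfolding Rdet_def .
qed

lemma Rdet_eq_0_if_not_distinct:
  assumes "\<not> distinct K"
  shows "Rdet w K = 0"
proof -
  from assms obtain i j where "i < length K" "j < length K" "i \<noteq> j" "K ! i = K ! j"
    by (auto simp: distinct_conv_nth)
  then show ?thesis
    unfolding Rdet_def by (intro det_identical_rows[of _ "length K" i j]) (auto intro!: eq_vecI)
qed

lemma Rdet_sorted_representative:
  obtains K' and c :: int
  where "sorted_wrt (>) K'" "length K' = length K" "Rdet w K = of_int c * Rdet w K'"
proof (cases "distinct K")
  case True
  let ?K' = "rev (sort K)"
  obtain p where p: "p permutes {..<length K}" "permute_list p K = ?K'"
    using mset_eq_permutation[of ?K' K] by auto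
  have "sign p * sign p = (1::int)" by (simp add: sign_def)
  then have "signof p * signof p = (1 :: 'a)" by (metis of_int_1 of_int_mult)
  then have "Rdet w K = of_int (sign p) * Rdet w ?K'"
    using Rdet_permute_list[OF p(1), of w] p(2) by (simp add: mult.assoc[symmetric])
  moreover have "sorted_wrt (>) ?K'"
    using True by (simp add: sorted_wrt_rev strict_sorted_iff)
  ultimately show ?thesis using that by simp
next
  case False
  let ?K' = "rev (map int [0..<length K])"
  have "sorted_wrt (>) ?K'" by (simp add: sorted_wrt_rev sorted_wrt_map)
  then show ?thesis using that[of ?K' 0] Rdet_eq_0_if_not_distinct[OF False, of w] by simp
qed

section \<open>Spans modulo an ideal\<close>

lemma sum_lessThan_add_split:
  "(\<Sum>i<k1 + k2. if i < k1 then f i else g (i - k1)) = (\<Sum>i<(k1::nat). f i) + (\<Sum>i<k2. g i :: 'a::comm_monoid_add)"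
  by (induction k2) (auto simp: add.assoc)

lemma zspanI: "(\<And>i. i < k \<Longrightarrow> s i \<in> S) \<Longrightarrow> (\<Sum>i<(k::nat). of_int (c i) * s i) \<in> zspan S"
  unfolding zspan_def by blast

lemma zspanE:
  assumes "x \<in> zspan S"
  obtains k c s where "x = (\<Sum>i<(k::nat). of_int (c i) * s i)" "\<And>i. i < k \<Longrightarrow> s i \<in> S"
  using assms unfolding zspan_def by blast

lemma zspan_zero: "0 \<in> zspan S"
  using zspanI[of 0] by simp

lemma zspan_superset: "x \<in> S \<Longrightarrow> x \<in> zspan S"
  using zspanI[of 1 "\<lambda>_. x" S "\<lambda>_. 1"] by simp

lemma zspan_add:
  assumes "x \<in> zspan S" "y \<in> zspan S"
  shows "x + y \<in> zspan S"
proof -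
  obtain k1 c1 s1 where x: "x = (\<Sum>i<(k1::nat). of_int (c1 i) * s1 i)" "\<And>i. i < k1 \<Longrightarrow> s1 i \<in> S"
    using assms(1) by (elim zspanE) blast
  obtain k2 c2 s2 where y: "y = (\<Sum>i<(k2::nat). of_int (c2 i) * s2 i)" "\<And>i. i < k2 \<Longrightarrow> s2 i \<in> S"
    using assms(2) by (elim zspanE) blast
  have "x + y = (\<Sum>i<k1 + k2. of_int (if i < k1 then c1 i else c2 (i - k1)) *
                                  (if i < k1 then s1 i else s2 (i - k1)))"
    unfolding x y sum_lessThan_add_split[symmetric] by (rule sum.cong) auto
  also have "\<dots> \<in> zspan S"
    by (rule zspanI) (use x y in auto)
  finally show ?thesis .
qed

lemma zspan_of_int_mult:
  assumes "x \<in> zspan S"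
  shows "of_int d * x \<in> zspan S"
proof -
  obtain k c s where x: "x = (\<Sum>i<(k::nat). of_int (c i) * s i)" "\<And>i. i < k \<Longrightarrow> s i \<in> S"
    using assms by (elim zspanE) blast
  have "of_int d * x = (\<Sum>i<k. of_int (d * c i) * s i)"
    unfolding x sum_distrib_left by (simp add: mult.assoc)
  also have "\<dots> \<in> zspan S" by (rule zspanI) (use x in auto)
  finally show ?thesis .
qed

lemma gen_idealI: "(\<And>i. i < k \<Longrightarrow> s i \<in> S) \<Longrightarrow> (\<Sum>i<(k::nat). c i * s i) \<in> gen_ideal S"
  unfolding gen_ideal_def by blast

lemma gen_idealE:
  assumes "x \<in> gen_ideal S"
  obtains k c s where "x = (\<Sum>i<(k::nat). c i * s i)" "\<And>i. i < k \<Longrightarrow> s i \<in> S"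
  using assms unfolding gen_ideal_def by blast

lemma gen_ideal_zero: "0 \<in> gen_ideal S"
  using gen_idealI[of 0] by simp

lemma gen_ideal_superset: "x \<in> S \<Longrightarrow> x \<in> gen_ideal S"
  using gen_idealI[of 1 "\<lambda>_. x" S "\<lambda>_. 1"] by simp

lemma gen_ideal_add:
  assumes "x \<in> gen_ideal S" "y \<in> gen_ideal S"
  shows "x + y \<in> gen_ideal S"
proof -
  obtain k1 c1 s1 where x: "x = (\<Sum>i<(k1::nat). c1 i * s1 i)" "\<And>i. i < k1 \<Longrightarrow> s1 i \<in> S"
    using assms(1) by (elim gen_idealE) blast
  obtain k2 c2 s2 where y: "y = (\<Sum>i<(k2::nat). c2 i * s2 i)" "\<And>i. i < k2 \<Longrightarrow> s2 i \<in> S"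
    using assms(2) by (elim gen_idealE) blast
  have "x + y = (\<Sum>i<k1 + k2. (if i < k1 then c1 i else c2 (i - k1)) *
                                  (if i < k1 then s1 i else s2 (i - k1)))"
    unfolding x y sum_lessThan_add_split[symmetric] by (rule sum.cong) auto
  also have "\<dots> \<in> gen_ideal S"
    by (rule gen_idealI) (use x y in auto)
  finally show ?thesis .
qed

lemma gen_ideal_mult_left:
  assumes "x \<in> gen_ideal S"
  shows "r * x \<in> gen_ideal S"
proof -
  obtain k c s where x: "x = (\<Sum>i<(k::nat). c i * s i)" "\<And>i. i < k \<Longrightarrow> s i \<in> S"
    using assms by (elim gen_idealE) blast
  have "r * x = (\<Sum>i<k. (r * c i) * s i)"
    unfolding x sum_distrib_left by (simp add: mult.assoc)
  also have "\<dots> \<in> gen_ideal S" by (rule gen_idealI) (use x in auto)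
  finally show ?thesis .
qed

definition zspan_mod :: "'a::comm_ring_1 set \<Rightarrow> 'a set \<Rightarrow> 'a set" where
  "zspan_mod S G = {a + b | a b. a \<in> zspan S \<and> b \<in> gen_ideal G}"

lemma zspan_modE:
  assumes "x \<in> zspan_mod S G"
  obtains a b where "x = a + b" "a \<in> zspan S" "b \<in> gen_ideal G"
  using assms unfolding zspan_mod_def by blast

lemma zspan_mod_add:
  assumes "x \<in> zspan_mod S G" "y \<in> zspan_mod S G"
  shows "x + y \<in> zspan_mod S G"
proof -
  obtain a b a' b' where "x = a + b" "y = a' + b'" "a \<in> zspan S" "a' \<in> zspan S"
    "b \<in> gen_ideal G" "b' \<in> gen_ideal G"
    using assms by (metis zspan_modE)
  then have "x + y = (a + a') + (b + b')" "a + a' \<in> zspan S" "b + b' \<in> gen_ideal G"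
    by (simp_all add: algebra_simps zspan_add gen_ideal_add)
  then show ?thesis unfolding zspan_mod_def by blast
qed

lemma zspan_mod_of_int_mult:
  assumes "x \<in> zspan_mod S G"
  shows "of_int d * x \<in> zspan_mod S G"
proof -
  obtain a b where "x = a + b" "a \<in> zspan S" "b \<in> gen_ideal G"
    using assms by (rule zspan_modE)
  then have "of_int d * x = of_int d * a + of_int d * b" "of_int d * a \<in> zspan S"
      "of_int d * b \<in> gen_ideal G"
    by (simp_all add: distrib_left zspan_of_int_mult gen_ideal_mult_left)
  then show ?thesis unfolding zspan_mod_def by blast
qed

lemma zspan_mod_neg_one_power_mult: "x \<in> zspan_mod S G \<Longrightarrow> (-1) ^ e * x \<in> zspan_mod S G"
  using zspan_mod_of_int_mult[of x S G "(-1) ^ e"] by simp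

lemma zspan_mod_diff:
  assumes "x \<in> zspan_mod S G" "y \<in> zspan_mod S G"
  shows "x - y \<in> zspan_mod S G"
  using zspan_mod_add[OF assms(1) zspan_mod_neg_one_power_mult[OF assms(2), of 1]] by simp

lemma gen_ideal_subset_zspan_mod: "b \<in> gen_ideal G \<Longrightarrow> b \<in> zspan_mod S G"
  unfolding zspan_mod_def using zspan_zero by force

lemma zspan_mod_zero: "0 \<in> zspan_mod S G"
  by (rule gen_ideal_subset_zspan_mod[OF gen_ideal_zero])

lemma zspan_mod_of_int_mult_generator: "x \<in> S \<Longrightarrow> of_int c * x \<in> zspan_mod S G"
  unfolding zspan_mod_def using zspan_of_int_mult[OF zspan_superset] gen_ideal_zero by force

lemma zspan_mod_sum:
  "finite A \<Longrightarrow> (\<And>x. x \<in> A \<Longrightarrow> f x \<in> zspan_mod S G) \<Longrightarrow> sum f A \<in> zspan_mod S G"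
  by (induction A rule: finite_induct) (auto intro: zspan_mod_add zspan_mod_zero)

section \<open>Induction over integer polynomials\<close>

lemma single_single_one_eq_power:
  "Poly_Mapping.single (Poly_Mapping.single x b) (1::'a::comm_semiring_1) =
     Poly_Mapping.single (Poly_Mapping.single x 1) 1 ^ b"
proof (induction b)
  case (Suc b)
  have "Poly_Mapping.single (Poly_Mapping.single x (Suc b)) (1::'a) =
      Poly_Mapping.single (Poly_Mapping.single x 1 + Poly_Mapping.single x b) (1 * 1)"
    by (simp add: single_add[symmetric])
  also have "\<dots> = Poly_Mapping.single (Poly_Mapping.single x 1) 1 * Poly_Mapping.single (Poly_Mapping.single x b) 1"
    by (rule mult_single[symmetric])
  finally show ?case using Suc by simp
qed simp

lemma int_poly_mapping_induct [case_names one diff var]: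
  fixes P :: "(('v \<Rightarrow>\<^sub>0 nat) \<Rightarrow>\<^sub>0 int) \<Rightarrow> bool"
  assumes one: "P 1" and diff: "\<And>a b. P a \<Longrightarrow> P b \<Longrightarrow> P (a - b)"
    and var: "\<And>x f. P f \<Longrightarrow> P (Poly_Mapping.single (Poly_Mapping.single x 1) 1 * f)"
  shows "P q"
proof -
  have power: "P (Poly_Mapping.single (Poly_Mapping.single x 1) 1 ^ b * f)" if "P f" for x b f
    using that by (induction b) (auto simp only: power_0 mult_1_left power_Suc mult.assoc var)
  have monomial: "P (Poly_Mapping.single \<mu> 1 * f)" if "P f" for \<mu> f
    using that
  proof (induction \<mu> arbitrary: f rule: Poly_Mapping.update_induct)
    case (update \<mu> x b)
    have "Poly_Mapping.update x b \<mu> = \<mu> + Poly_Mapping.single x b"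
      using update(1)
      by (intro poly_mapping_eqI) (auto simp: lookup_update lookup_add lookup_single in_keys_iff)
    then have "Poly_Mapping.single (Poly_Mapping.update x b \<mu>) (1::int) =
        Poly_Mapping.single \<mu> 1 * Poly_Mapping.single (Poly_Mapping.single x 1) 1 ^ b"
      unfolding single_single_one_eq_power[symmetric] by (simp only: mult_single) simp
    then show ?case using update power by (simp add: mult.assoc)
  qed simp
  show ?thesis
  proof (rule frag_induction[of q UNIV])
    show "P 0" using diff[OF one one] by simp
    show "P (frag_of \<mu>)" for \<mu> using monomial[OF one] by simp
  qed (auto intro: diff)
qed

section \<open>Spanning the ring\<close>

lemma Rdet_minor_mult_in_zspan_mod:
  assumes "\<And>I. length I = length K \<Longrightarrow> Rdet w I * g \<in> zspan_mod S G" and "j \<le> length K"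
  shows "Rdet_minor w K j * g \<in> zspan_mod S G"
  unfolding Rdet_minor_eq_sum_shift_entries[OF assms(2)] sum_distrib_right
  by (rule zspan_mod_sum) (auto intro: assms(1) finite_subset[of _ "Pow {..<length K}"])

definition u_monomial :: "nat list \<Rightarrow> zpoly" where
  "u_monomial J = (\<Prod>k<length J. uu (int k + 1) ^ (J ! k))"

abbreviation Rspan :: "nat \<Rightarrow> nat \<Rightarrow> zpoly set" where
  "Rspan m n \<equiv> zspan_mod {RIJ m n I J | I J. (I, J) \<in> Xplus m n} {RI m n I | I. length I = m + 1}"

lemma RI_eq_Rdet: "RI m n I = Rdet (ww m n) I"
  unfolding RI_def Rdet_def ..

lemma RIJ_eq: "RIJ m n I J = Rdet (ww m n) I * u_monomial J"
  unfolding RIJ_def u_monomial_def RI_eq_Rdet ..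

lemma uu_0: "uu 0 = 1"
  by (simp add: uu_def)

lemma uu_neg: "i < 0 \<Longrightarrow> uu i = 0"
  by (simp add: uu_def)

lemma Var_Ugen: "Var (Ugen i) = uu (int i + 1)"
  by (simp add: uu_def)

lemma ww_eq_uu: "int n - int m < i \<Longrightarrow> ww m n i = uu i"
  by (simp add: ww_def vv_def)

lemma Var_Vgen: "Var (Vgen j) = uu (int n - int m - int j) - ww m n (int n - int m - int j)"
  by (simp add: ww_def vv_def)

lemma uu_mult_u_monomial:
  assumes "1 \<le> l" "l \<le> int (length J)"
  shows "uu l * u_monomial J = u_monomial (J[nat l - 1 := J ! (nat l - 1) + 1])"
proof -
  let ?k = "nat l - 1"
  have "?k < length J" "int ?k + 1 = l" using assms by linarith+
  have "u_monomial (J[?k := J ! ?k + 1]) =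
      (\<Prod>k<length J. uu (int k + 1) ^ (J ! k) * (if k = ?k then uu (int k + 1) else 1))"
    unfolding u_monomial_def by (rule prod.cong) (auto simp: nth_list_update)
  also have "\<dots> = u_monomial J * uu l"
    unfolding u_monomial_def prod.distrib using \<open>?k < length J\<close> \<open>int ?k + 1 = l\<close> by simp
  finally show ?thesis by (simp add: mult.commute)
qed

lemma u_monomial_replicate_0 [simp]: "u_monomial (replicate q 0) = 1"
  by (simp add: u_monomial_def)

lemma Rdet_length_Suc_mult_in_Rspan:
  assumes "length I = Suc m"
  shows "Rdet (ww m n) I * f \<in> Rspan m n"
proof -
  have "f * RI m n I \<in> gen_ideal {RI m n I | I. length I = m + 1}"
    by (intro gen_ideal_mult_left gen_ideal_superset) (use assms in auto)
  then show ?thesis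
    unfolding RI_eq_Rdet mult.commute[of f] by (rule gen_ideal_subset_zspan_mod)
qed

lemma Rdet_mult_u_monomial_in_Rspan:
  assumes "length I \<le> m" "length J \<le> n" "int (length I) - int (length J) = int m - int n"
  shows "Rdet (ww m n) I * u_monomial J \<in> Rspan m n"
proof -
  obtain K c where K: "sorted_wrt (>) K" "length K = length I"
    and c: "Rdet (ww m n) I = of_int c * Rdet (ww m n) K"
    by (rule Rdet_sorted_representative)
  have "(K, J) \<in> Xplus m n" unfolding Xplus_def using K assms by auto
  then have "of_int c * RIJ m n K J \<in> Rspan m n"
    by (blast intro: zspan_mod_of_int_mult_generator)
  then show ?thesis unfolding RIJ_eq c by (simp add: mult.assoc)
qed

lemma uu_mult_in_Rspan_if_le:
  assumes f: "\<And>I J. length I = p \<Longrightarrow> length J = q \<Longrightarrow> Rdet (ww m n) I * u_monomial J * f \<in> Rspan m n"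
    and I: "length I = p" and J: "length J = q" and l: "l \<le> int q"
  shows "Rdet (ww m n) I * u_monomial J * (uu l * f) \<in> Rspan m n"
proof -
  consider "l < 0" | "l = 0" | "1 \<le> l" by linarith
  then show ?thesis
  proof cases
    case 1
    then show ?thesis by (simp add: uu_neg zspan_mod_zero)
  next
    case 2
    then show ?thesis using f I J by (simp add: uu_0)
  next
    case 3
    let ?J' = "J[nat l - 1 := J ! (nat l - 1) + 1]"
    have "Rdet (ww m n) I * u_monomial J * (uu l * f) = Rdet (ww m n) I * (uu l * u_monomial J) * f"
      by (simp add: ac_simps)
    also have "\<dots> = Rdet (ww m n) I * u_monomial ?J' * f"
      using uu_mult_u_monomial[OF 3, of J] l J by simp
    finally show ?thesis using f[of I ?J'] I J by simp
  qed
qed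

lemma ww_mult_in_Rspan:
  assumes longer: "\<And>I g. length I = Suc p \<Longrightarrow> Rdet (ww m n) I * g \<in> Rspan m n"
    and q: "int q = int p + int n - int m"
    and f: "\<And>I J. length I = p \<Longrightarrow> length J = q \<Longrightarrow> Rdet (ww m n) I * u_monomial J * f \<in> Rspan m n"
    and I: "length I = p" and J: "length J = q"
  shows "Rdet (ww m n) I * u_monomial J * (ww m n c * f) \<in> Rspan m n"
proof -
  let ?w = "ww m n"
  let ?g = "\<lambda>c. u_monomial J * (?w c * f)"
  define k where "k = int n - int m"
  \<comment> \<open>distance of c from the window k < c \<le> k + p, in which w_c = u_c\<close>
  define dist where "dist c = (if c \<le> k then nat (k + 1 - c) else nat (c - k - int p))" for c
  have "Rdet ?w I * ?g c \<in> Rspan m n"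
    using I
  proof (induction c arbitrary: I rule: measure_induct_rule[of dist])
    case (less c)
    have minor: "Rdet_minor ?w K j * ?g c' \<in> Rspan m n"
      if "length K = p" "j \<le> p" "dist c' < dist c" for K j c'
      by (rule Rdet_minor_mult_in_zspan_mod) (use that less.IH in auto)
    consider (window) "k < c" "c \<le> k + int p" | (above) "k + int p < c" | (below) "c \<le> k"
      by linarith
    then show ?case
    proof cases
      case window
      then have "?w c = uu c" "c \<le> int q" using q by (simp_all add: ww_eq_uu k_def)
      then show ?thesis using uu_mult_in_Rspan_if_le[OF f less.prems J] by (simp add: mult.assoc)
    next
      case above
      define y where "y = c - int p"
      have "Rdet ?w I * ?g c = Rdet ?w I * (?w (y + int (length I)) * (u_monomial J * f))"
        using less.prems by (simp add: y_def mult_ac)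
      also have "\<dots> \<in> Rspan m n"
        unfolding Rdet_mult_last_column_entry
      proof (intro zspan_mod_diff zspan_mod_sum zspan_mod_neg_one_power_mult)
        show "Rdet ?w (I @ [y]) * (u_monomial J * f) \<in> Rspan m n"
          using longer less.prems by simp
        show "Rdet_minor ?w I j * (?w (y + int j) * (u_monomial J * f)) \<in> Rspan m n"
          if "j \<in> {..<length I}" for j
          using minor[of I j "y + int j"] that above less.prems by (simp add: dist_def y_def mult_ac)
      qed simp
      finally show ?thesis .
    next
      case below
      define K where "K = map (\<lambda>x. x - 1) I"
      have K: "length K = p" "map (\<lambda>x. x + 1) K = I"
        using less.prems by (simp_all add: K_def comp_def)
      have "Rdet ?w I * ?g c = Rdet ?w (map (\<lambda>x. x + 1) K) * (?w c * (u_monomial J * f))"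
        using K by (simp add: mult_ac)
      also have "\<dots> \<in> Rspan m n"
        unfolding Rdet_mult_first_column_entry
      proof (intro zspan_mod_diff zspan_mod_sum zspan_mod_neg_one_power_mult)
        show "Rdet ?w (K @ [c]) * (u_monomial J * f) \<in> Rspan m n"
          using longer K by simp
        show "Rdet_minor ?w K (Suc j) * (?w (c + int (Suc j)) * (u_monomial J * f)) \<in> Rspan m n"
          if "j \<in> {..<length K}" for j
          using minor[of K "Suc j" "c + int (Suc j)"] that below K by (simp add: dist_def mult_ac)
      qed simp
      finally show ?thesis .
    qed
  qed
  then show ?thesis by (simp add: mult.assoc)
qed

lemma Rdet_mult_u_monomial_mult_in_Rspan:
  assumes "p \<le> m" and longer: "\<And>I g. length I = Suc p \<Longrightarrow> Rdet (ww m n) I * g \<in> Rspan m n"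
    and q: "int q = int p + int n - int m"
    and "length I = p" "length J = q"
  shows "Rdet (ww m n) I * u_monomial J * f \<in> Rspan m n"
  using assms(4,5)
proof (induction f arbitrary: I J rule: int_poly_mapping_induct)
  case one
  then show ?case using Rdet_mult_u_monomial_in_Rspan[of I m J n] q \<open>p \<le> m\<close> by simp
next
  case (diff a b)
  then show ?case
    using zspan_mod_diff[of "Rdet (ww m n) I * u_monomial J * a"] by (simp add: right_diff_distrib)
next
  case (var x f)
  have ww: "Rdet (ww m n) I * u_monomial J * (ww m n c * f) \<in> Rspan m n" for c
    by (rule ww_mult_in_Rspan[OF longer q]) (use var in auto)
  have uu: "Rdet (ww m n) I * u_monomial J * (uu l * f) \<in> Rspan m n" for l
  proof (cases "l \<le> int q")
    case True
    then show ?thesis by (rule uu_mult_in_Rspan_if_le[rotated -1]) (use var in auto)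
  next
    case False
    then have "uu l = ww m n l" using q by (simp add: ww_eq_uu)
    then show ?thesis using ww by simp
  qed
  show ?case
  proof (cases x)
    case (Ugen i)
    then show ?thesis using uu Var_Ugen[of i] by (simp add: Var_def)
  next
    case (Vgen j)
    define l where "l = int n - int m - int j"
    have "Rdet (ww m n) I * u_monomial J * (Var x * f) =
        Rdet (ww m n) I * u_monomial J * (uu l * f) - Rdet (ww m n) I * u_monomial J * (ww m n l * f)"
      unfolding Vgen Var_Vgen[of j n m] l_def by (simp add: algebra_simps)
    then show ?thesis using zspan_mod_diff[OF uu ww] by (simp add: Var_def)
  qed
qed

lemma Rdet_mult_in_Rspan_step:
  assumes "p \<le> m" and longer: "\<And>I g. length I = Suc p \<Longrightarrow> Rdet (ww m n) I * g \<in> Rspan m n"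
    and I: "length I = p"
  shows "Rdet (ww m n) I * f \<in> Rspan m n"
proof (cases "int p + int n - int m < 0")
  case True
  have "Rdet (ww m n) (I @ [- int p]) = Rdet (ww m n) I"
    by (rule Rdet_snoc_unit_row) (use True I in \<open>simp_all add: ww_eq_uu uu_neg uu_0\<close>)
  then show ?thesis using longer[of "I @ [- int p]" f] I by simp
next
  case False
  define q where "q = nat (int p + int n - int m)"
  have "int q = int p + int n - int m" using False by (simp add: q_def)
  from Rdet_mult_u_monomial_mult_in_Rspan[OF assms(1,2) this I, of "replicate q 0" f]
  show ?thesis by simp
qed

lemma mem_Rspan: "f \<in> Rspan m n"
proof -
  have "\<forall>I f. length I = p \<longrightarrow> Rdet (ww m n) I * f \<in> Rspan m n" if "p \<le> Suc m" for p
    using that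
  proof (induction p rule: inc_induct)
    case base
    then show ?case using Rdet_length_Suc_mult_in_Rspan by blast
  next
    case (step p)
    then show ?case using Rdet_mult_in_Rspan_step[of p m n] by simp
  qed
  from this[of 0] show ?thesis by simp
qed

theorem mainTheorem9:
  fixes m n :: nat
  shows "\<forall>p :: zpoly. \<exists>a b. a \<in> zspan {RIJ m n I J | I J. (I, J) \<in> Xplus m n}
            \<and> b \<in> Uideal m n \<and> p = a + b"
  using mem_Rspan[of _ m n] unfolding zspan_mod_def Uideal_def by blast

end
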